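(* Let $X$ be a metric space, $n\ge0$, and let $D^{(n+1)}_X$ be an $n$-dimensional control function of $X$. Define inductively $D^{(i+1)}_X(r)=D^{(i)}_X(3r)+2r$ for all $i\ge n+1$. Then for every $k\ge n+1$, $D^{(k)}_X$ is an $(n,k)$-dimensional control function of $X$.
   Context: A family of subsets of $X$ is $r$-disjoint if $d(a,b)\ge r$ whenever $a,b$ lie in different members; it is $D$-bounded if all members have diameter $\le D$. An $n$-dimensional control function of $X$ is $D_X\colon\mathbb R_+\to\mathbb R_+$ such that for every $r>0$ there are $r$-disjoint, $D_X(r)$-bounded families $\mathcal U_1,\dots,\mathcal U_{n+1}$ whose union covers $X$. For $k\ge n+1\ge1$, an $(n,k)$-dimensional control function of $X$ is $D_X\colon\mathbb R_+\to\mathbb R_+$ such that for every $r>0$ there are families $\mathcal U_1,\dots,\mathcal U_k$ of subsets of $X$, each $r$-disjoint and $D_X(r)$-bounded, such that every $x\in X$ belongs to members of at least $k-n$ of the families (equivalently, $\bigcup_{i\in T}\mathcal U_i$ covers $X$ for every $T\subset\{1,\dots,k\}$ with $|T|=n+1$). *)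

theory Defs
  imports "HOL-Analysis.Analysis"
begin

definition r_disjoint :: "real \<Rightarrow> 'a::metric_space set set \<Rightarrow> bool" where
  "r_disjoint r \<U> \<longleftrightarrow>
     (\<forall>U\<in>\<U>. \<forall>V\<in>\<U>. U \<noteq> V \<longrightarrow> (\<forall>a\<in>U. \<forall>b\<in>V. r \<le> dist a b))"

definition D_bounded :: "real \<Rightarrow> 'a::metric_space set set \<Rightarrow> bool" where
  "D_bounded D \<U> \<longleftrightarrow> (\<forall>U\<in>\<U>. \<forall>a\<in>U. \<forall>b\<in>U. dist a b \<le> D)"

definition dim_control_function :: "'a::metric_space set \<Rightarrow> nat \<Rightarrow> (real \<Rightarrow> real) \<Rightarrow> bool" where
  "dim_control_function X n DX \<longleftrightarrow>
     (\<forall>r>0. 0 \<le> DX r) \<and>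
     (\<forall>r>0. \<exists>\<U> :: nat \<Rightarrow> 'a set set.
        (\<forall>i<n+1. (\<forall>U\<in>\<U> i. U \<subseteq> X) \<and> r_disjoint r (\<U> i) \<and> D_bounded (DX r) (\<U> i)) \<and>
        X \<subseteq> (\<Union>i<n+1. \<Union>(\<U> i)))"

definition nk_control_function :: "'a::metric_space set \<Rightarrow> nat \<Rightarrow> nat \<Rightarrow> (real \<Rightarrow> real) \<Rightarrow> bool" where
  "nk_control_function X n k DX \<longleftrightarrow>
     (\<forall>r>0. 0 \<le> DX r) \<and>
     (\<forall>r>0. \<exists>\<U> :: nat \<Rightarrow> 'a set set.
        (\<forall>i<k. (\<forall>U\<in>\<U> i. U \<subseteq> X) \<and> r_disjoint r (\<U> i) \<and> D_bounded (DX r) (\<U> i)) \<and>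
        (\<forall>x\<in>X. k - n \<le> card {i. i < k \<and> (\<exists>U\<in>\<U> i. x \<in> U)}))"

end

theory Submission
  imports Defs
begin

text \<open>
  For the step take k families at
  scale 3r. Replacing every member by its open r-neighbourhood in X keeps them r-disjoint at the
  cost of 2r in diameter, and a point now lies in the i-th new family whenever it is r-near a
  member of the i-th old one. Only points r-near at most k - n old families need the extra
  family, and by hypothesis such a point lies in members of exactly the k - n families it is
  near; call their index set T. The extra family consists, for each T of size k - n and each
  member U of the family with index Min T, of the points of U with index set T. Pieces with
  the same T lie in distinct members of one r-disjoint family; pieces with different T are
  separated by an index j \<in> T - T', since points of the first lie in a member of family j
  while points of the second are not r-near any of its members.
\<close>

definition cover_indices :: "(nat \<Rightarrow> 'a set set) \<Rightarrow> nat \<Rightarrow> 'a \<Rightarrow> nat set" where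
  "cover_indices \<U> k x = {i. i < k \<and> (\<exists>U\<in>\<U> i. x \<in> U)}"

definition controlled_families ::
    "'a::metric_space set \<Rightarrow> nat \<Rightarrow> real \<Rightarrow> real \<Rightarrow> (nat \<Rightarrow> 'a set set) \<Rightarrow> bool" where
  "controlled_families X k r D \<U> \<longleftrightarrow>
     (\<forall>i<k. (\<forall>U\<in>\<U> i. U \<subseteq> X) \<and> r_disjoint r (\<U> i) \<and> D_bounded D (\<U> i))"

definition thickening :: "real \<Rightarrow> 'a::metric_space set \<Rightarrow> 'a set" where
  "thickening r U = (\<Union>u\<in>U. ball u r)"

definition thickened :: "'a::metric_space set \<Rightarrow> real \<Rightarrow> (nat \<Rightarrow> 'a set set) \<Rightarrow> nat \<Rightarrow> 'a set set" where
  "thickened X r \<U> i = (\<lambda>U. X \<inter> thickening r U) ` \<U> i"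

lemma dim_control_function_iff:
  "dim_control_function X n D \<longleftrightarrow>
     (\<forall>r>0. 0 \<le> D r) \<and>
     (\<forall>r>0. \<exists>\<U>. controlled_families X (Suc n) r (D r) \<U> \<and> (\<forall>x\<in>X. cover_indices \<U> (Suc n) x \<noteq> {}))"
  unfolding dim_control_function_def controlled_families_def cover_indices_def
  by (simp add: subset_eq Bex_def)

lemma nk_control_function_iff:
  "nk_control_function X n k D \<longleftrightarrow>
     (\<forall>r>0. 0 \<le> D r) \<and>
     (\<forall>r>0. \<exists>\<U>. controlled_families X k r (D r) \<U> \<and> (\<forall>x\<in>X. k - n \<le> card (cover_indices \<U> k x)))"
  unfolding nk_control_function_def controlled_families_def cover_indices_def by simp

lemma finite_cover_indices [simp]: "finite (cover_indices \<U> k x)"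
  unfolding cover_indices_def by simp

lemma card_cover_indices_fun_upd_Suc:
  "card (cover_indices (\<U>(k := \<W>)) (Suc k) x) =
     card (cover_indices \<U> k x) + (if \<exists>W\<in>\<W>. x \<in> W then 1 else 0)"
proof -
  have "cover_indices (\<U>(k := \<W>)) (Suc k) x =
          cover_indices \<U> k x \<union> (if \<exists>W\<in>\<W>. x \<in> W then {k} else {})"
    unfolding cover_indices_def less_Suc_eq by auto
  moreover have "k \<notin> cover_indices \<U> k x" by (simp add: cover_indices_def)
  ultimately show ?thesis by simp
qed

lemma controlled_families_fun_upd_Suc:
  "controlled_families X (Suc k) r D (\<U>(k := \<W>)) \<longleftrightarrow>
     controlled_families X k r D \<U> \<and> (\<forall>W\<in>\<W>. W \<subseteq> X) \<and> r_disjoint r \<W> \<and> D_bounded D \<W>"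
proof -
  have "controlled_families X k r D (\<U>(k := \<W>)) = controlled_families X k r D \<U>"
    unfolding controlled_families_def by simp
  then show ?thesis
    unfolding controlled_families_def All_less_Suc by auto
qed

lemma r_disjoint_mono: "r_disjoint s \<U> \<Longrightarrow> r \<le> s \<Longrightarrow> r_disjoint r \<U>"
  unfolding r_disjoint_def by force

lemma D_bounded_mono: "D_bounded D \<U> \<Longrightarrow> D \<le> D' \<Longrightarrow> D_bounded D' \<U>"
  unfolding D_bounded_def by force

lemma controlled_families_mono:
  assumes "controlled_families X k s D \<U>" "r \<le> s" "D \<le> D'"
  shows "controlled_families X k r D' \<U>"
  using assms(1) r_disjoint_mono[OF _ assms(2)] D_bounded_mono[OF _ assms(3)]
  unfolding controlled_families_def by blast

lemma mem_thickening: "x \<in> thickening r U \<longleftrightarrow> (\<exists>u\<in>U. dist u x < r)"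
  unfolding thickening_def by auto

lemma r_disjoint_thickening:
  assumes "r_disjoint (s + 2*r) \<U>"
  shows "r_disjoint s ((\<lambda>U. X \<inter> thickening r U) ` \<U>)"
  unfolding r_disjoint_def
proof (intro ballI impI)
  fix A B a b
  assume "A \<in> (\<lambda>U. X \<inter> thickening r U) ` \<U>" "B \<in> (\<lambda>U. X \<inter> thickening r U) ` \<U>" "A \<noteq> B"
    and "a \<in> A" "b \<in> B"
  then obtain U V where "U \<in> \<U>" "V \<in> \<U>" "U \<noteq> V"
    and "a \<in> thickening r U" "b \<in> thickening r V"
    by blast
  then obtain u v where "u \<in> U" "v \<in> V" "dist u a < r" "dist v b < r"
    by (auto simp: mem_thickening)
  moreover have "dist u v \<le> dist u a + dist a b + dist v b"
    using dist_triangle[of u v a] dist_triangle[of a v b] dist_commute[of b v] by linarith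
  moreover have "s + 2*r \<le> dist u v"
    using assms \<open>U \<in> \<U>\<close> \<open>V \<in> \<U>\<close> \<open>U \<noteq> V\<close> \<open>u \<in> U\<close> \<open>v \<in> V\<close>
    unfolding r_disjoint_def by blast
  ultimately show "s \<le> dist a b" by linarith
qed

lemma D_bounded_thickening:
  assumes "D_bounded D \<U>"
  shows "D_bounded (D + 2*r) ((\<lambda>U. X \<inter> thickening r U) ` \<U>)"
  unfolding D_bounded_def
proof (intro ballI)
  fix A a b
  assume "A \<in> (\<lambda>U. X \<inter> thickening r U) ` \<U>" "a \<in> A" "b \<in> A"
  then obtain U u v where "U \<in> \<U>" "u \<in> U" "v \<in> U" "dist u a < r" "dist v b < r"
    by (auto simp: mem_thickening)
  moreover have "dist a b \<le> dist u a + dist u v + dist v b"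
    using dist_triangle[of a b u] dist_triangle[of u b v] dist_commute[of a u] by linarith
  moreover have "dist u v \<le> D"
    using assms \<open>U \<in> \<U>\<close> \<open>u \<in> U\<close> \<open>v \<in> U\<close> unfolding D_bounded_def by blast
  ultimately show "dist a b \<le> D + 2*r" by linarith
qed

lemma controlled_families_thickened:
  assumes "controlled_families X k (s + 2*r) D \<U>"
  shows "controlled_families X k s (D + 2*r) (thickened X r \<U>)"
  unfolding controlled_families_def thickened_def
proof (intro allI impI conjI)
  fix i assume "i < k"
  with assms have "r_disjoint (s + 2*r) (\<U> i)" "D_bounded D (\<U> i)"
    unfolding controlled_families_def by auto
  then show "r_disjoint s ((\<lambda>U. X \<inter> thickening r U) ` \<U> i)"
    and "D_bounded (D + 2*r) ((\<lambda>U. X \<inter> thickening r U) ` \<U> i)"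
    by (simp_all add: r_disjoint_thickening D_bounded_thickening)
qed auto

lemma mem_cover_indices_thickened:
  "i \<in> cover_indices (thickened X r \<U>) k x \<longleftrightarrow>
     i < k \<and> x \<in> X \<and> (\<exists>U\<in>\<U> i. \<exists>u\<in>U. dist u x < r)"
  unfolding cover_indices_def thickened_def by (auto simp: mem_thickening)

lemma cover_indices_subset_thickened:
  assumes "0 < r" "x \<in> X"
  shows "cover_indices \<U> k x \<subseteq> cover_indices (thickened X r \<U>) k x"
proof
  fix i assume "i \<in> cover_indices \<U> k x"
  then obtain U where "i < k" "U \<in> \<U> i" "x \<in> U" unfolding cover_indices_def by blast
  then show "i \<in> cover_indices (thickened X r \<U>) k x"
    using assms unfolding mem_cover_indices_thickened by force
qed

lemma cover_indices_thickened_eq: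
  assumes "0 < r" "x \<in> X"
    and "m \<le> card (cover_indices \<U> k x)" "card (cover_indices (thickened X r \<U>) k x) \<le> m"
  shows "cover_indices (thickened X r \<U>) k x = cover_indices \<U> k x"
proof -
  note sub = cover_indices_subset_thickened[OF assms(1,2), of \<U> k]
  have "card (cover_indices \<U> k x) = card (cover_indices (thickened X r \<U>) k x)"
    using card_mono[OF finite_cover_indices sub] assms(3,4) by linarith
  from card_subset_eq[OF finite_cover_indices sub this] show ?thesis by (rule sym)
qed

context
  fixes X :: "'a::metric_space set" and k m :: nat and r D :: real and \<U> :: "nat \<Rightarrow> 'a set set"
  assumes fam: "controlled_families X k r D \<U>"
    and mult: "\<forall>x\<in>X. m \<le> card (cover_indices \<U> k x)"
    and m_pos: "0 < m" and r_pos: "0 < r"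
begin

definition stratum :: "'a set \<Rightarrow> nat set \<Rightarrow> 'a set" where
  "stratum U T = {x \<in> X \<inter> U. cover_indices (thickened X r \<U>) k x = T}"

definition extra_family :: "'a set set" where
  "extra_family = {stratum U T | U T. card T = m \<and> U \<in> \<U> (Min T)}"

lemma mem_stratum:
  assumes "x \<in> stratum U T" "card T = m"
  shows "x \<in> X" "x \<in> U" "cover_indices (thickened X r \<U>) k x = T"
    and "cover_indices \<U> k x = T" "Min T < k"
proof -
  show "x \<in> X" "x \<in> U" and near: "cover_indices (thickened X r \<U>) k x = T"
    using assms(1) unfolding stratum_def by auto
  then show "cover_indices \<U> k x = T"
    using cover_indices_thickened_eq[of r x X m \<U> k] mult assms(2) r_pos by auto
  have "Min T \<in> T" using assms(2) m_pos by (intro Min_in) (auto simp: card_gt_0_iff)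
  then show "Min T < k" using near unfolding cover_indices_def by auto
qed

lemma extra_family_subset: "W \<in> extra_family \<Longrightarrow> W \<subseteq> X"
  unfolding extra_family_def stratum_def by auto

lemma r_disjoint_extra_family: "r_disjoint r extra_family"
  unfolding r_disjoint_def
proof (intro ballI impI)
  fix A B a b assume "A \<in> extra_family" "B \<in> extra_family" "A \<noteq> B" "a \<in> A" "b \<in> B"
  then obtain U T V T' where A: "a \<in> stratum U T" "card T = m" "U \<in> \<U> (Min T)"
    and B: "b \<in> stratum V T'" "card T' = m" "V \<in> \<U> (Min T')" and "stratum U T \<noteq> stratum V T'"
    unfolding extra_family_def by blast
  note a = mem_stratum[OF A(1,2)] and b = mem_stratum[OF B(1,2)]
  show "r \<le> dist a b"
  proof (cases "T = T'")
    case True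
    with \<open>stratum U T \<noteq> stratum V T'\<close> B(3) have "U \<noteq> V" "V \<in> \<U> (Min T)" by auto
    moreover have "r_disjoint r (\<U> (Min T))" using fam a(5) unfolding controlled_families_def by blast
    ultimately show ?thesis using A(3) a(2) b(2) unfolding r_disjoint_def by blast
  next
    case False
    have "\<not> T \<subseteq> T'"
      using card_subset_eq[of T' T] False A(2) B(2) b(4) finite_cover_indices by metis
    then obtain j where "j \<in> T" "j \<notin> T'" by blast
    then obtain W where "j < k" "W \<in> \<U> j" "a \<in> W"
      using a(4) unfolding cover_indices_def by auto
    moreover have "j \<notin> cover_indices (thickened X r \<U>) k b" using b(3) \<open>j \<notin> T'\<close> by simp
    ultimately have "\<not> dist a b < r"
      using b(1) unfolding mem_cover_indices_thickened by blast
    then show ?thesis by simp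
  qed
qed

lemma D_bounded_extra_family: "D_bounded D extra_family"
  unfolding D_bounded_def
proof (intro ballI)
  fix A a b assume "A \<in> extra_family" "a \<in> A" "b \<in> A"
  then obtain U T where a: "a \<in> stratum U T" and b: "b \<in> stratum U T"
    and "card T = m" "U \<in> \<U> (Min T)"
    unfolding extra_family_def by blast
  moreover have "D_bounded D (\<U> (Min T))"
    using fam mem_stratum(5)[OF a \<open>card T = m\<close>] unfolding controlled_families_def by blast
  ultimately show "dist a b \<le> D"
    using mem_stratum(2) unfolding D_bounded_def by blast
qed

lemma extra_family_covers:
  assumes "x \<in> X" "card (cover_indices (thickened X r \<U>) k x) \<le> m"
  shows "\<exists>W\<in>extra_family. x \<in> W"
proof -
  define T where "T = cover_indices (thickened X r \<U>) k x"
  have T: "cover_indices \<U> k x = T" "card T = m"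
    using cover_indices_thickened_eq[of r x X m \<U> k] mult assms r_pos unfolding T_def by auto
  have "Min T \<in> T" using T(2) m_pos by (intro Min_in) (auto simp: card_gt_0_iff)
  then obtain U where "U \<in> \<U> (Min T)" "x \<in> U" unfolding T(1)[symmetric] cover_indices_def by auto
  then have "x \<in> stratum U T" "stratum U T \<in> extra_family"
    using assms(1) T unfolding stratum_def extra_family_def T_def by auto
  then show ?thesis by blast
qed

end

lemma nk_control_function_base:
  assumes "dim_control_function X n D"
  shows "nk_control_function X n (Suc n) D"
  using assms unfolding dim_control_function_iff nk_control_function_iff
  by (simp add: Suc_le_eq card_gt_0_iff)

lemma exists_controlled_families_Suc:
  assumes fam: "controlled_families X k (3*r) D \<U>"
    and mult: "\<forall>x\<in>X. k - n \<le> card (cover_indices \<U> k x)" and "n < k" "0 < r"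
  shows "\<exists>\<V>. controlled_families X (Suc k) r (D + 2*r) \<V> \<and>
             (\<forall>x\<in>X. Suc k - n \<le> card (cover_indices \<V> (Suc k) x))"
proof -
  have "3*r = r + 2*r" by simp
  then have thick: "controlled_families X k r (D + 2*r) (thickened X r \<U>)"
    using controlled_families_thickened[of X k r r D \<U>] fam by simp
  have fam_r: "controlled_families X k r D \<U>"
    using controlled_families_mono[OF fam, of r D] \<open>0 < r\<close> by simp
  have "0 < k - n" using \<open>n < k\<close> by simp
  note extra_hyps = fam_r mult \<open>0 < k - n\<close> \<open>0 < r\<close>
  define \<W> where "\<W> = extra_family X k (k - n) r \<U>"
  have \<W>: "\<forall>W\<in>\<W>. W \<subseteq> X" "r_disjoint r \<W>" "D_bounded D \<W>"
    using extra_family_subset[OF extra_hyps] r_disjoint_extra_family[OF extra_hyps]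
      D_bounded_extra_family[OF extra_hyps]
    unfolding \<W>_def by blast+
  have \<W>_cover: "\<exists>W\<in>\<W>. x \<in> W"
    if "x \<in> X" "card (cover_indices (thickened X r \<U>) k x) \<le> k - n" for x
    using extra_family_covers[OF extra_hyps that] unfolding \<W>_def .
  have "controlled_families X (Suc k) r (D + 2*r) ((thickened X r \<U>)(k := \<W>))"
    using thick \<W> D_bounded_mono[OF \<W>(3)] \<open>0 < r\<close> by (simp add: controlled_families_fun_upd_Suc)
  moreover have "Suc k - n \<le> card (cover_indices ((thickened X r \<U>)(k := \<W>)) (Suc k) x)"
    if "x \<in> X" for x
  proof -
    have "k - n \<le> card (cover_indices (thickened X r \<U>) k x)"
      using mult that card_mono[OF finite_cover_indices cover_indices_subset_thickened[OF \<open>0 < r\<close> that]]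
      by (meson order_trans)
    then show ?thesis
      using \<W>_cover[OF that] Suc_diff_le[OF less_imp_le[OF \<open>n < k\<close>]]
      by (cases "card (cover_indices (thickened X r \<U>) k x) \<le> k - n")
        (simp_all add: card_cover_indices_fun_upd_Suc)
  qed
  ultimately show ?thesis by blast
qed

lemma nk_control_function_Suc:
  assumes nk: "nk_control_function X n k D" and "n < k"
    and D': "\<And>r. 0 < r \<Longrightarrow> D' r = D (3*r) + 2*r"
  shows "nk_control_function X n (Suc k) D'"
proof -
  from nk have D_nonneg: "\<forall>r>0. 0 \<le> D r"
    and families: "\<forall>r>0. \<exists>\<U>. controlled_families X k r (D r) \<U> \<and>
                              (\<forall>x\<in>X. k - n \<le> card (cover_indices \<U> k x))"
    unfolding nk_control_function_iff by blast+
  have "\<exists>\<V>. controlled_families X (Suc k) r (D' r) \<V> \<and>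
            (\<forall>x\<in>X. Suc k - n \<le> card (cover_indices \<V> (Suc k) x))" if "0 < r" for r
  proof -
    from families obtain \<U> where "controlled_families X k (3*r) (D (3*r)) \<U>"
      and "\<forall>x\<in>X. k - n \<le> card (cover_indices \<U> k x)"
      using \<open>0 < r\<close> by (meson zero_less_mult_iff zero_less_numeral)
    from exists_controlled_families_Suc[OF this \<open>n < k\<close> \<open>0 < r\<close>] show ?thesis
      unfolding D'[OF \<open>0 < r\<close>] .
  qed
  moreover have "0 \<le> D' r" if "0 < r" for r
    using D_nonneg D'[OF that] that by simp
  ultimately show ?thesis unfolding nk_control_function_iff by blast
qed

theorem mainTheorem6:
  fixes X :: "'a::metric_space set" and n :: nat and D :: "nat \<Rightarrow> real \<Rightarrow> real"
  assumes "dim_control_function X n (D (n+1))"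
    and "\<And>i r. i \<ge> n+1 \<Longrightarrow> r > 0 \<Longrightarrow> D (Suc i) r = D i (3*r) + 2*r"
  shows "\<forall>k\<ge>n+1. nk_control_function X n k (D k)"
proof (intro allI impI)
  fix k assume "n + 1 \<le> k"
  then show "nk_control_function X n k (D k)"
  proof (induction k rule: dec_induct)
    case base
    show ?case using nk_control_function_base[OF assms(1)] by simp
  next
    case (step k)
    then show ?case using assms(2) by (intro nk_control_function_Suc) auto
  qed
qed

end
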